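(* Let $X$ be a set and let $w$ be a word on $X^{\pm1}$ with two decompositions $$w\equiv a_1w_1^{m_1}b_1\equiv a_2w_2^{m_2}b_2,$$ where $m_i\ge2$ and $w_i,a_i,b_i$ are words for $i=1,2$. Suppose that $w_1,w_2$ are primitive and that there are non-negative real constants $A,B$ such that $|a_i|\le A$, $|b_i|\le B$ and $|w|-(A+B)\ge 2|w_i|$ for $i=1,2$. Then $w_1$ and $w_2$ are cyclically conjugate words. Furthermore, regarding words as elements of the free group on $X$, $a_1w_1a_1^{-1}=a_2w_2a_2^{-1}$ and $b_1^{-1}w_1b_1=b_2^{-1}w_2b_2$.
   Context: Words are finite sequences of letters from $X^{\pm1}$; $\equiv$ is letterwise equality; $|w|$ is the number of letters of $w$. A nonempty word is primitive if it is not $u^k$ (as a word) for any word $u$ and $k\ge2$. A cyclic conjugate of a word $w\equiv u_1u_2$ is the word $u_2u_1$. *)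

theory Defs
  imports Complex_Main
begin

text \<open>Letters of X^{+-1}: a pair (x, s) with x :: 'a (the set X is the type 'a);
  s = True means x, s = False means x^{-1}. Words are lists of letters.\<close>
type_synonym 'a letter = "'a \<times> bool"
type_synonym 'a word = "'a letter list"

definition inv_letter :: "'a letter \<Rightarrow> 'a letter" where
  "inv_letter l = (fst l, \<not> snd l)"

definition inv_word :: "'a word \<Rightarrow> 'a word" where
  "inv_word w = rev (map inv_letter w)"

definition word_pow :: "'a word \<Rightarrow> nat \<Rightarrow> 'a word" where
  "word_pow u k = concat (replicate k u)"

definition primitive :: "'a word \<Rightarrow> bool" where
  "primitive w \<longleftrightarrow> w \<noteq> [] \<and> \<not> (\<exists>u k. k \<ge> 2 \<and> w = word_pow u k)"

definition cyc_conj :: "'a word \<Rightarrow> 'a word \<Rightarrow> bool" where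
  "cyc_conj v w \<longleftrightarrow> (\<exists>u1 u2. v = u1 @ u2 \<and> w = u2 @ u1)"

inductive cancel1 :: "'a word \<Rightarrow> 'a word \<Rightarrow> bool" where
  "cancel1 (p @ [l, inv_letter l] @ q) (p @ q)"

definition free_eq :: "'a word \<Rightarrow> 'a word \<Rightarrow> bool" where
  "free_eq u v \<longleftrightarrow> equivclp cancel1 u v"

end

theory Submission
  imports Defs
begin

(* Both powers cover a common stretch of w of length at least |w1| + |w2|.  If |w1| < |w2|,
   the factor of length |w2| at the start of that stretch is a rotation of w2 and is unchanged
   when shifted by |w1| letters; so w2 equals one of its proper rotations, and the
   Lyndon-Schutzenberger theorem on commuting words makes w2 a proper power.  Hence
   |w1| = |w2|, and if |a1| <= |a2| then a2 = a1 x with x w2 = w1 x: this conjugacy equation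
   gives both the cyclic conjugacy and a2 w2 a2^-1 = a1 w1 a1^-1 in the free group.  The claim
   about the b_i is the claim about the a_i for the formal inverse of w. *)

lemma word_pow_0 [simp]: "word_pow u 0 = []"
  by (simp add: word_pow_def)

lemma word_pow_Suc: "word_pow u (Suc k) = u @ word_pow u k"
  by (simp add: word_pow_def)

lemma length_word_pow [simp]: "length (word_pow u k) = k * length u"
  by (induct k) (auto simp: word_pow_Suc)

lemma word_pow_commute: "word_pow u k @ u = u @ word_pow u k"
  by (induct k) (simp_all add: word_pow_Suc)

lemma nth_word_pow: "i < k * length u \<Longrightarrow> word_pow u k ! i = u ! (i mod length u)"
proof (induct k arbitrary: i)
  case (Suc k)
  then show ?case
    by (cases "i < length u") (auto simp: word_pow_Suc nth_append le_mod_geq)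
qed simp

lemma nth_word_pow_append:
  "i < m * length u \<Longrightarrow> (word_pow u m @ b) ! i = u ! (i mod length u)"
  by (simp add: nth_append nth_word_pow)

lemma take_drop_word_pow_append:
  assumes "i + length u \<le> m * length u"
  shows "take (length u) (drop i (word_pow u m @ b)) = rotate i u"
proof (rule nth_equalityI)
  fix j assume "j < length (take (length u) (drop i (word_pow u m @ b)))"
  then have "j < length u" "i + j < m * length u" using assms by auto
  then show "take (length u) (drop i (word_pow u m @ b)) ! j = rotate i u ! j"
    by (simp add: nth_rotate nth_word_pow_append add.commute del: take_append drop_append)
qed (use assms in auto)

lemma take_drop_word_pow_append_shift:
  assumes "i + length u + n \<le> m * length u"
  shows "take n (drop (i + length u) (word_pow u m @ b)) = take n (drop i (word_pow u m @ b))"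
proof (rule nth_equalityI)
  fix j assume "j < length (take n (drop (i + length u) (word_pow u m @ b)))"
  then have "j < n" "i + length u + j < m * length u" using assms by auto
  then show "take n (drop (i + length u) (word_pow u m @ b)) ! j
    = take n (drop i (word_pow u m @ b)) ! j"
    by (simp add: nth_word_pow_append add.assoc add.left_commute[of i "length u"]
        del: take_append drop_append)
qed (use assms in auto)

lemma primitive_rotate_neq:
  assumes "primitive u" "0 < d" "d < length u"
  shows "rotate d u \<noteq> u"
proof
  assume "rotate d u = u"
  then have "drop d u @ take d u = take d u @ drop d u"
    using assms by (simp add: rotate_drop_take)
  moreover have "take d u \<noteq> []" "drop d u \<noteq> []"
    using assms by auto
  ultimately obtain n v where "1 < n" "concat (replicate n v) = u"
    using comm_append_is_replicate by (metis append_take_drop_id)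
  then have "2 \<le> n" "u = word_pow v n"
    by (simp_all add: word_pow_def)
  then show False
    using assms(1) unfolding primitive_def by blast
qed

lemma inj_rotate: "inj (rotate n)"
  by (simp add: rotate_def inj_rotate1)

lemma conjugate_equation_cyc_conj:
  "x @ v = u @ x \<Longrightarrow> cyc_conj u v"
proof (induction "length x" arbitrary: x rule: less_induct)
  case less
  consider "length x \<le> length u" | "u = []" | "u \<noteq> []" "length u < length x"
    by linarith
  then show ?case
  proof cases
    case 1
    then obtain t where "u = x @ t" "v = t @ x"
      using less.prems by (auto simp: append_eq_append_conv2)
    then show ?thesis unfolding cyc_conj_def by blast
  next
    case 2
    then show ?thesis
      using less.prems by (simp add: cyc_conj_def)
  next
    case 3
    then obtain y where "x = u @ y" "y @ v = u @ y"
      using less.prems by (auto simp: append_eq_append_conv2)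
    then show ?thesis
      using less.hyps[of y] \<open>u \<noteq> []\<close> by simp
  qed
qed

lemma cyc_conj_sym: "cyc_conj u v \<Longrightarrow> cyc_conj v u"
  unfolding cyc_conj_def by blast

lemma inv_letter_inv_letter [simp]: "inv_letter (inv_letter l) = l"
  by (simp add: inv_letter_def)

lemma inv_word_inv_word [simp]: "inv_word (inv_word u) = u"
  by (simp add: inv_word_def rev_map comp_def)

lemma inv_word_append [simp]: "inv_word (u @ v) = inv_word v @ inv_word u"
  by (simp add: inv_word_def)

lemma inv_word_Nil [simp]: "inv_word [] = []"
  by (simp add: inv_word_def)

lemma length_inv_word [simp]: "length (inv_word u) = length u"
  by (simp add: inv_word_def)

lemma inv_word_word_pow: "inv_word (word_pow u k) = word_pow (inv_word u) k"
  by (induct k) (simp_all add: word_pow_Suc word_pow_commute)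

lemma primitive_inv_word: "primitive u \<Longrightarrow> primitive (inv_word u)"
  unfolding primitive_def by (metis inv_word_inv_word inv_word_word_pow inv_word_Nil)

lemma free_eq_sym: "free_eq u v \<Longrightarrow> free_eq v u"
  by (simp add: free_eq_def equivclp_sym)

lemma free_eq_trans [trans]: "free_eq u v \<Longrightarrow> free_eq v w \<Longrightarrow> free_eq u w"
  unfolding free_eq_def by (rule equivclp_trans)

lemma cancel1_append: "cancel1 u v \<Longrightarrow> cancel1 (x @ u @ z) (x @ v @ z)"
  by (induct rule: cancel1.induct) (metis append.assoc cancel1.intros)

lemma cancel1_inv_word: "cancel1 u v \<Longrightarrow> cancel1 (inv_word u) (inv_word v)"
proof (induct rule: cancel1.induct)
  case (1 p l q)
  show ?case using cancel1.intros[of "inv_word q" l "inv_word p"]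
    by (simp add: inv_word_def)
qed

lemma free_eq_append: "free_eq u v \<Longrightarrow> free_eq (x @ u @ z) (x @ v @ z)"
  unfolding free_eq_def
  by (induct rule: equivclp_induct) (auto intro: cancel1_append equivclp_into_equivclp)

lemma free_eq_inv_word: "free_eq u v \<Longrightarrow> free_eq (inv_word u) (inv_word v)"
  unfolding free_eq_def
  by (induct rule: equivclp_induct) (auto intro: cancel1_inv_word equivclp_into_equivclp)

lemma free_eq_append_inv_word: "free_eq (u @ inv_word u) []"
proof (induct u)
  case (Cons l u)
  have "free_eq ([l] @ (u @ inv_word u) @ [inv_letter l]) ([l] @ [] @ [inv_letter l])"
    using Cons by (rule free_eq_append)
  also have "free_eq ([l] @ [] @ [inv_letter l]) []"
    unfolding free_eq_def using cancel1.intros[of "[]" l "[]"] by auto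
  finally show ?case
    by (simp add: inv_word_def)
qed (simp add: free_eq_def)

lemma free_eq_conjugate:
  assumes "x @ v = u @ x"
  shows "free_eq ((a @ x) @ v @ inv_word (a @ x)) (a @ u @ inv_word a)"
proof -
  have "(a @ x) @ v @ inv_word (a @ x) = (a @ u) @ (x @ inv_word x) @ inv_word a"
    using assms by (metis append.assoc inv_word_append)
  also have "free_eq \<dots> ((a @ u) @ [] @ inv_word a)"
    by (rule free_eq_append[OF free_eq_append_inv_word])
  finally show ?thesis
    by simp
qed

lemma primitive_power_overlap_length_le:
  assumes eq: "a1 @ word_pow w1 m1 @ b1 = a2 @ word_pow w2 m2 @ b2"
    and "primitive w2" "w1 \<noteq> []"
    and overlap1: "max (length a1) (length a2) + length w1 + length w2 \<le> length a1 + m1 * length w1"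
    and overlap2: "max (length a1) (length a2) + length w1 + length w2 \<le> length a2 + m2 * length w2"
  shows "length w2 \<le> length w1"
proof (rule ccontr)
  assume shorter: "\<not> length w2 \<le> length w1"
  define lo where "lo = max (length a1) (length a2)"
  define c1 where "c1 = lo - length a1"
  define c2 where "c2 = lo - length a2"
  define s1 where "s1 = word_pow w1 m1 @ b1"
  define s2 where "s2 = word_pow w2 m2 @ b2"
  have drop_eq: "drop (c1 + k) s1 = drop (c2 + k) s2" for k
    using arg_cong[OF eq, of "drop (lo + k)"]
    by (simp add: c1_def c2_def lo_def s1_def s2_def)
  have "rotate (c2 + length w1) w2 = take (length w2) (drop (c2 + length w1) s2)"
    unfolding s2_def
    by (rule take_drop_word_pow_append[symmetric]) (use overlap2 in \<open>simp add: c2_def lo_def\<close>)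
  also have "\<dots> = take (length w2) (drop (c1 + length w1) s1)"
    by (simp add: drop_eq)
  also have "\<dots> = take (length w2) (drop c1 s1)"
    unfolding s1_def
    by (rule take_drop_word_pow_append_shift) (use overlap1 in \<open>simp add: c1_def lo_def\<close>)
  also have "\<dots> = take (length w2) (drop c2 s2)"
    using drop_eq[of 0] by simp
  also have "\<dots> = rotate c2 w2"
    unfolding s2_def
    by (rule take_drop_word_pow_append) (use overlap2 in \<open>simp add: c2_def lo_def\<close>)
  finally have "rotate c2 (rotate (length w1) w2) = rotate c2 w2"
    by (simp add: rotate_rotate add.commute)
  then have "rotate (length w1) w2 = w2"
    by (rule injD[OF inj_rotate])
  with primitive_rotate_neq[OF \<open>primitive w2\<close>] shorter \<open>w1 \<noteq> []\<close> show False
    by simp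
qed

lemma primitive_power_overlap_conjugate_equation:
  assumes eq: "a1 @ word_pow w1 m1 @ b1 = a2 @ word_pow w2 m2 @ b2"
    and "primitive w1" "primitive w2" "length a1 \<le> length a2"
    and overlap1: "length a2 + length w1 + length w2 \<le> length a1 + m1 * length w1"
    and overlap2: "length a2 + length w1 + length w2 \<le> length a2 + m2 * length w2"
  obtains x where "a2 = a1 @ x" "x @ w2 = w1 @ x"
proof -
  have nonempty: "0 < length w1" "0 < length w2"
    using assms(2,3) by (simp_all add: primitive_def)
  have same_length: "length w1 = length w2"
    using primitive_power_overlap_length_le[OF eq] primitive_power_overlap_length_le[OF eq[symmetric]]
      assms nonempty by (simp add: max_absorb2)
  define s where "s = word_pow w1 m1 @ b1"
  define x where "x = take (length a2 - length a1) s"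
  have a2: "a2 = a1 @ x"
    using arg_cong[OF eq, of "take (length a2)"] assms(4) by (simp add: s_def x_def)
  obtain k2 where "m2 = Suc k2"
    using overlap2 nonempty by (cases m2) auto
  then have "s = x @ w2 @ word_pow w2 k2 @ b2"
    using eq by (simp add: a2 s_def word_pow_Suc)
  then have "x @ w2 = take (length x + length w1) s"
    by (simp add: same_length)
  also have "\<dots> = take (length w1) s @ take (length x) (drop (0 + length w1) s)"
    by (simp add: take_add add.commute)
  also have "take (length x) (drop (0 + length w1) s) = take (length x) (drop 0 s)"
    unfolding s_def
    by (rule take_drop_word_pow_append_shift) (use overlap1 a2 in simp)
  also have "take (length w1) s = w1"
    using overlap1 nonempty assms(4) by (cases m1) (auto simp: s_def word_pow_Suc)
  finally have "x @ w2 = w1 @ x"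
    by (simp add: x_def min_def)
  with a2 show ?thesis
    using that by blast
qed

lemma primitive_powers_conjugate:
  fixes A B :: nat
  assumes e1: "w = a1 @ word_pow w1 m1 @ b1" and e2: "w = a2 @ word_pow w2 m2 @ b2"
    and "primitive w1" "primitive w2"
    and "length a1 \<le> A" "length a2 \<le> A" "length b1 \<le> B" "length b2 \<le> B"
    and "A + B + 2 * length w1 \<le> length w" "A + B + 2 * length w2 \<le> length w"
  shows "cyc_conj w1 w2 \<and> free_eq (a1 @ w1 @ inv_word a1) (a2 @ w2 @ inv_word a2)"
proof -
  have "length w = length a1 + m1 * length w1 + length b1"
    using e1 by simp
  moreover have "length w = length a2 + m2 * length w2 + length b2"
    using e2 by simp
  ultimately have overlap:
    "length ai + length w1 + length w2 \<le> length a1 + m1 * length w1"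
    "length ai + length w1 + length w2 \<le> length a2 + m2 * length w2"
    if "length ai \<le> A" for ai :: "'a word"
    using that assms(7-10) by linarith+
  show ?thesis
  proof (cases "length a1 \<le> length a2")
    case True
    then obtain x where "a2 = a1 @ x" "x @ w2 = w1 @ x"
      using primitive_power_overlap_conjugate_equation[of a1 w1 m1 b1 a2 w2 m2 b2] e1 e2 assms(3,4,6)
        overlap by blast
    then show ?thesis
      using conjugate_equation_cyc_conj free_eq_conjugate free_eq_sym by metis
  next
    case False
    have "length a1 + length w2 + length w1 \<le> length a2 + m2 * length w2"
      "length a1 + length w2 + length w1 \<le> length a1 + m1 * length w1"
      using overlap[OF assms(5)] by linarith+
    then obtain x where "a1 = a2 @ x" "x @ w1 = w2 @ x"
      using primitive_power_overlap_conjugate_equation[of a2 w2 m2 b2 a1 w1 m1 b1] e1 e2 assms(3,4)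
        False by auto
    then show ?thesis
      using conjugate_equation_cyc_conj cyc_conj_sym free_eq_conjugate by metis
  qed
qed

theorem proposition3p3:
  fixes w a1 w1 b1 a2 w2 b2 :: "'a word" and m1 m2 :: nat and A B :: real
  assumes "w = a1 @ word_pow w1 m1 @ b1"
    and "w = a2 @ word_pow w2 m2 @ b2"
    and "m1 \<ge> 2" and "m2 \<ge> 2"
    and "primitive w1" and "primitive w2"
    and "A \<ge> 0" and "B \<ge> 0"
    and "real (length a1) \<le> A" and "real (length a2) \<le> A"
    and "real (length b1) \<le> B" and "real (length b2) \<le> B"
    and "real (length w) - (A + B) \<ge> 2 * real (length w1)"
    and "real (length w) - (A + B) \<ge> 2 * real (length w2)"
  shows "cyc_conj w1 w2
    \<and> free_eq (a1 @ w1 @ inv_word a1) (a2 @ w2 @ inv_word a2)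
    \<and> free_eq (inv_word b1 @ w1 @ b1) (inv_word b2 @ w2 @ b2)"
proof -
  define A' where "A' = max (length a1) (length a2)"
  define B' where "B' = max (length b1) (length b2)"
  have "real A' \<le> A" "real B' \<le> B"
    using assms(9-12) by (simp_all add: A'_def B'_def)
  then have bounds: "A' + B' + 2 * length w1 \<le> length w" "A' + B' + 2 * length w2 \<le> length w"
    using assms(13,14) by linarith+
  have prefix_part: "cyc_conj w1 w2 \<and> free_eq (a1 @ w1 @ inv_word a1) (a2 @ w2 @ inv_word a2)"
    by (rule primitive_powers_conjugate[OF assms(1,2,5,6) _ _ _ _ bounds])
      (simp_all add: A'_def B'_def)
  have inv1: "inv_word w = inv_word b1 @ word_pow (inv_word w1) m1 @ inv_word a1"
    using assms(1) by (simp add: inv_word_word_pow)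
  have inv2: "inv_word w = inv_word b2 @ word_pow (inv_word w2) m2 @ inv_word a2"
    using assms(2) by (simp add: inv_word_word_pow)
  have "free_eq (inv_word b1 @ inv_word w1 @ b1) (inv_word b2 @ inv_word w2 @ b2)"
    using primitive_powers_conjugate[OF inv1 inv2 primitive_inv_word primitive_inv_word, of B' A']
      assms(5,6) bounds by (simp add: A'_def B'_def add.commute)
  then have "free_eq (inv_word b1 @ w1 @ b1) (inv_word b2 @ w2 @ b2)"
    using free_eq_inv_word by fastforce
  with prefix_part show ?thesis
    by blast
qed

end
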